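(* Let $G=\{\alpha_t: t\in\mathbb{N}\}$ be a subgroup of $\mathbb{T}$ and let $(M_t)_{t\in\mathbb{N}}$ be a sequence of positive integers. Then there exists a sequence $(V_t)_{t\in\mathbb{N}}$ of open subsets of $\mathbb{T}$ such that (i) $V_t\supseteq\langle\alpha_1,\ldots,\alpha_t\rangle_{M_t}$ for all $t\in\mathbb{N}$, and (ii) $\bigcup_{k\in\mathbb{N}}\bigcap_{t\ge k}V_t = G$.
   Context: $\mathbb{T}=\mathbb{R}/\mathbb{Z}$. For $M\in\mathbb{N}$, $\langle\alpha_1,\ldots,\alpha_t\rangle_M=\{k_1\alpha_1+\cdots+k_t\alpha_t: k_i\in\mathbb{Z},\ |k_1|,\ldots,|k_t|\le M\}$. *)

theory Defs
  imports "HOL-Analysis.Analysis"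
begin

text \<open>The torus T = R/Z is represented through the quotient map R -> R/Z:
  a subset of T is represented by its (Z-periodic) preimage in R.
  A subset U of T is open iff its preimage is open (quotient topology);
  a subset of T is a subgroup iff its preimage is an additive subgroup of R.\<close>

definition zperiodic :: "real set \<Rightarrow> bool" where
  "zperiodic S \<longleftrightarrow> (\<forall>x\<in>S. \<forall>n\<in>\<int>. x + n \<in> S)"

definition real_add_subgroup :: "real set \<Rightarrow> bool" where
  "real_add_subgroup H \<longleftrightarrow> 0 \<in> H \<and> (\<forall>x\<in>H. \<forall>y\<in>H. x + y \<in> H \<and> - x \<in> H)"

text \<open>Preimage in R of the subset {alpha_t : t >= 1} of T.\<close>
definition torus_set :: "(nat \<Rightarrow> real) \<Rightarrow> real set" where
  "torus_set \<alpha> = {x. \<exists>t\<ge>1. x - \<alpha> t \<in> \<int>}"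

text \<open>Preimage in R of the set <alpha_1,...,alpha_t>_M of T.\<close>
definition bounded_span :: "(nat \<Rightarrow> real) \<Rightarrow> nat \<Rightarrow> nat \<Rightarrow> real set" where
  "bounded_span \<alpha> t M = {x. \<exists>k::nat \<Rightarrow> int. (\<forall>i\<in>{1..t}. \<bar>k i\<bar> \<le> int M) \<and>
       x - (\<Sum>i=1..t. of_int (k i) * \<alpha> i) \<in> \<int>}"

end

theory Submission
  imports Defs
begin

text \<open>Let \<open>A\<^sub>t\<close> be (the preimage of) \<open>\<langle>\<alpha>\<^sub>1,\<dots>,\<alpha>\<^sub>t\<rangle>\<^bsub>N\<^sub>t\<^esub>\<close>, where \<open>N\<^sub>t\<close> is the partial
  sum \<open>\<Sum>\<^sub>j\<^sub>\<le>\<^sub>t M\<^sub>j\<close>. These sets increase, exhaust \<open>G\<close>, and each is a finite union of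
  cosets of \<open>\<int>\<close>, hence uniformly discrete. Let \<open>V\<^sub>t\<close> be the \<open>r\<^sub>t\<close>-neighbourhood of
  \<open>A\<^sub>t\<close>, with \<open>r\<^sub>t \<rightarrow> 0\<close> and \<open>r\<^sub>t + r\<^sub>t\<^sub>+\<^sub>1\<close> below the separation constant of \<open>A\<^sub>t\<^sub>+\<^sub>1\<close>.
  If \<open>x \<in> V\<^sub>t\<close> for all \<open>t \<ge> k\<close>, the points of \<open>A\<^sub>t\<close> within \<open>r\<^sub>t\<close> of \<open>x\<close> are then all the
  same point \<open>a\<close>, and \<open>r\<^sub>t \<rightarrow> 0\<close> forces \<open>x = a \<in> G\<close>.\<close>

lemma uniform_discrete_radii:
  fixes A :: "nat \<Rightarrow> 'a::metric_space set"
  assumes "\<And>t. uniform_discrete (A t)"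
  obtains r :: "nat \<Rightarrow> real"
  where "\<And>t. r t > 0" and "r \<longlonglongrightarrow> 0"
    and "\<And>t a b. a \<in> A (Suc t) \<Longrightarrow> b \<in> A (Suc t) \<Longrightarrow> dist a b < r t + r (Suc t) \<Longrightarrow> a = b"
proof -
  have "\<exists>\<delta>>0. \<delta> \<le> inverse (real (Suc t)) \<and> (\<forall>a\<in>A t. \<forall>b\<in>A t. dist a b < \<delta> \<longrightarrow> a = b)" for t
  proof -
    obtain e where "e > 0" and e: "\<forall>a\<in>A t. \<forall>b\<in>A t. dist a b < e \<longrightarrow> a = b"
      using assms[of t] unfolding uniform_discrete_def by blast
    then show ?thesis
      by (intro exI[of _ "min e (inverse (real (Suc t)))"]) auto
  qed
  then obtain \<delta> where \<delta>_pos: "\<And>t. \<delta> t > 0" and \<delta>_le: "\<And>t. \<delta> t \<le> inverse (real (Suc t))"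
    and \<delta>_sep: "\<And>t. \<forall>a\<in>A t. \<forall>b\<in>A t. dist a b < \<delta> t \<longrightarrow> a = b"
    by metis
  define r where "r t = min (\<delta> t) (\<delta> (Suc t)) / 2" for t
  show thesis
  proof
    show "r t > 0" for t
      using \<delta>_pos[of t] \<delta>_pos[of "Suc t"] by (simp add: r_def)
    have "norm (r t) \<le> inverse (real (Suc t))" for t
      using \<delta>_pos[of t] \<delta>_pos[of "Suc t"] \<delta>_le[of t] by (simp add: r_def)
    then show "r \<longlonglongrightarrow> 0"
      by (intro Lim_null_comparison[OF _ LIMSEQ_inverse_real_of_nat]) auto
    fix t a b assume "a \<in> A (Suc t)" "b \<in> A (Suc t)" "dist a b < r t + r (Suc t)"
    moreover have "r t + r (Suc t) \<le> \<delta> (Suc t)"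
      by (simp add: r_def)
    ultimately show "a = b"
      using \<delta>_sep[of "Suc t"] by auto
  qed
qed

lemma eventually_in_balls_iff:
  fixes A :: "nat \<Rightarrow> 'a::metric_space set"
  assumes mono: "incseq A" and r_pos: "\<And>t. r t > 0" and r_lim: "r \<longlonglongrightarrow> 0"
    and sep: "\<And>t a b. a \<in> A (Suc t) \<Longrightarrow> b \<in> A (Suc t) \<Longrightarrow> dist a b < r t + r (Suc t) \<Longrightarrow> a = b"
  shows "(\<forall>\<^sub>F t in sequentially. x \<in> (\<Union>a\<in>A t. ball a (r t))) \<longleftrightarrow> x \<in> (\<Union>t. A t)"
proof
  assume "\<forall>\<^sub>F t in sequentially. x \<in> (\<Union>a\<in>A t. ball a (r t))"
  then obtain k where "\<forall>t\<ge>k. \<exists>a\<in>A t. dist a x < r t"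
    by (auto simp: eventually_sequentially)
  then obtain a where a_in: "\<And>t. t \<ge> k \<Longrightarrow> a t \<in> A t"
    and a_near: "\<And>t. t \<ge> k \<Longrightarrow> dist (a t) x < r t"
    by metis
  have a_const: "a t = a k" if "t \<ge> k" for t
    using that
  proof (induction t rule: dec_induct)
    case (step t)
    have "a t \<in> A (Suc t)"
      using a_in[OF step.hyps(1)] mono by (auto simp: incseq_Suc_iff)
    moreover have "dist (a t) (a (Suc t)) < r t + r (Suc t)"
      using a_near[of t] a_near[of "Suc t"] step.hyps by (intro dist_triangle_less_add) auto
    ultimately show ?case
      using sep a_in[of "Suc t"] step by force
  qed simp
  have "dist (a k) x \<le> r t" if "t \<ge> k" for t
    using a_near[OF that] a_const[OF that] by simp
  then have "dist (a k) x \<le> 0"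
    by (intro LIMSEQ_le_const[OF r_lim]) blast
  then show "x \<in> (\<Union>t. A t)"
    using a_in[of k] by auto
next
  assume "x \<in> (\<Union>t. A t)"
  then obtain s where "x \<in> A s" by blast
  then have "x \<in> A t" if "t \<ge> s" for t
    using mono that by (auto simp: incseq_def)
  then show "\<forall>\<^sub>F t in sequentially. x \<in> (\<Union>a\<in>A t. ball a (r t))"
    using r_pos by (auto simp: eventually_sequentially intro!: exI[of _ s] bexI[of _ x])
qed

lemma shrinking_balls_eventually_iff:
  fixes A :: "nat \<Rightarrow> 'a::metric_space set"
  assumes "incseq A" and "\<And>t. uniform_discrete (A t)"
  obtains r :: "nat \<Rightarrow> real" where "\<And>t. r t > 0"
    and "\<And>x. (\<forall>\<^sub>F t in sequentially. x \<in> (\<Union>a\<in>A t. ball a (r t))) \<longleftrightarrow> x \<in> (\<Union>t. A t)"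
proof -
  obtain r where r_pos: "\<And>t. r t > 0" and r_lim: "r \<longlonglongrightarrow> 0"
    and r_sep: "\<And>t a b. a \<in> A (Suc t) \<Longrightarrow> b \<in> A (Suc t) \<Longrightarrow> dist a b < r t + r (Suc t) \<Longrightarrow> a = b"
    using uniform_discrete_radii[of A, OF assms(2)] by metis
  show thesis
    by (rule that[OF r_pos eventually_in_balls_iff[OF assms(1) r_pos r_lim r_sep]])
qed

lemma Union_Inter_atLeast_eq_eventually:
  "(\<Union>k\<in>{m..}. \<Inter>t\<in>{k..}. V t) = {x. \<forall>\<^sub>F t in sequentially. x \<in> V t}"
proof (intro equalityI subsetI)
  fix x assume "x \<in> {x. \<forall>\<^sub>F t in sequentially. x \<in> V t}"
  then obtain k where "\<forall>t\<ge>k. x \<in> V t"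
    by (auto simp: eventually_sequentially)
  then show "x \<in> (\<Union>k\<in>{m..}. \<Inter>t\<in>{k..}. V t)"
    by (intro UN_I[of "max k m"]) auto
qed (auto simp: eventually_sequentially)

lemma min_frac_le_abs:
  fixes x :: "'a::floor_ceiling"
  shows "min (frac x) (1 - frac x) \<le> \<bar>x\<bar>"
proof (cases "x \<ge> 0")
  case True
  then have "floor x \<ge> 0"
    by simp
  then show ?thesis
    using True by (simp add: frac_def min_le_iff_disj)
next
  case False
  then have "floor x \<le> -1"
    by (simp add: floor_le_iff)
  then have "of_int (floor x) \<le> (-1 :: 'a)"
    by (metis of_int_1 of_int_le_iff of_int_minus)
  then have "1 - frac x \<le> \<bar>x\<bar>"
    using False by (simp add: frac_def)
  then show ?thesis
    by simp
qed

lemma Ints_translate_gap: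
  fixes d :: real
  shows "\<exists>\<delta>>0. \<forall>z\<in>\<int>. \<bar>d + z\<bar> < \<delta> \<longrightarrow> d + z = 0"
proof (cases "d \<in> \<int>")
  case True
  then show ?thesis
    by (intro exI[of _ 1]) (auto intro: Ints_nonzero_abs_less1)
next
  case False
  then have "frac d > 0"
    by simp
  moreover have "min (frac d) (1 - frac d) \<le> \<bar>d + z\<bar>" if "z \<in> \<int>" for z
    using min_frac_le_abs[of "d + z"] frac_add_int_right[OF that] by simp
  ultimately show ?thesis
    using frac_lt_1[of d] by (intro exI[of _ "min (frac d) (1 - frac d)"]) fastforce
qed

lemma finite_Ints_translate_gap:
  fixes D :: "real set"
  assumes "finite D"
  shows "\<exists>\<delta>>0. \<forall>d\<in>D. \<forall>z\<in>\<int>. \<bar>d + z\<bar> < \<delta> \<longrightarrow> d + z = 0"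
  using assms
proof (induction D rule: finite_induct)
  case empty
  then show ?case
    by (intro exI[of _ 1]) simp
next
  case (insert d D)
  then obtain \<delta>\<^sub>1 where "\<delta>\<^sub>1 > 0" "\<forall>d\<in>D. \<forall>z\<in>\<int>. \<bar>d + z\<bar> < \<delta>\<^sub>1 \<longrightarrow> d + z = 0"
    by blast
  moreover obtain \<delta>\<^sub>2 where "\<delta>\<^sub>2 > 0" "\<forall>z\<in>\<int>. \<bar>d + z\<bar> < \<delta>\<^sub>2 \<longrightarrow> d + z = 0"
    using Ints_translate_gap by blast
  ultimately show ?case
    by (intro exI[of _ "min \<delta>\<^sub>1 \<delta>\<^sub>2"]) auto
qed

lemma uniform_discrete_finite_plus_Ints:
  fixes F :: "real set"
  assumes "finite F"
  shows "uniform_discrete {x. \<exists>f\<in>F. x - f \<in> \<int>}"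
proof -
  have "finite ((\<lambda>(f, g). f - g) ` (F \<times> F))"
    using assms by simp
  then obtain \<delta> where "\<delta> > 0"
    and gap: "\<forall>d\<in>(\<lambda>(f, g). f - g) ` (F \<times> F). \<forall>z\<in>\<int>. \<bar>d + z\<bar> < \<delta> \<longrightarrow> d + z = 0"
    using finite_Ints_translate_gap by blast
  show ?thesis
  proof (rule uniformI1[OF \<open>\<delta> > 0\<close>])
    fix a b assume "a \<in> {x. \<exists>f\<in>F. x - f \<in> \<int>}" "b \<in> {x. \<exists>f\<in>F. x - f \<in> \<int>}" "dist a b < \<delta>"
    then obtain f g where "f \<in> F" "g \<in> F" "a - f \<in> \<int>" "b - g \<in> \<int>" "\<bar>a - b\<bar> < \<delta>"
      by (auto simp: dist_real_def)
    moreover have "a - b = (f - g) + ((a - f) - (b - g))"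
      by simp
    moreover have "f - g \<in> (\<lambda>(f, g). f - g) ` (F \<times> F)"
      using \<open>f \<in> F\<close> \<open>g \<in> F\<close> by force
    ultimately have "a - b = 0"
      using gap Ints_diff by metis
    then show "a = b"
      by simp
  qed
qed

lemma zperiodic_bounded_span: "zperiodic (bounded_span \<alpha> t N)"
  unfolding zperiodic_def
proof (intro ballI)
  fix x n assume "x \<in> bounded_span \<alpha> t N" "(n::real) \<in> \<int>"
  then obtain k where k_bound: "\<forall>i\<in>{1..t}. \<bar>k i\<bar> \<le> int N"
    and k_span: "x - (\<Sum>i=1..t. of_int (k i) * \<alpha> i) \<in> \<int>"
    unfolding bounded_span_def by blast
  have "x + n - (\<Sum>i=1..t. of_int (k i) * \<alpha> i) = (x - (\<Sum>i=1..t. of_int (k i) * \<alpha> i)) + n"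
    by simp
  then have "x + n - (\<Sum>i=1..t. of_int (k i) * \<alpha> i) \<in> \<int>"
    using k_span \<open>n \<in> \<int>\<close> by (metis Ints_add)
  with k_bound show "x + n \<in> bounded_span \<alpha> t N"
    unfolding bounded_span_def by blast
qed

lemma zperiodic_Union_balls:
  assumes "zperiodic A"
  shows "zperiodic (\<Union>a\<in>A. ball a r)"
  unfolding zperiodic_def
proof (intro ballI)
  fix x n assume "x \<in> (\<Union>a\<in>A. ball a r)" and n: "(n::real) \<in> \<int>"
  then obtain a where "a \<in> A" and near: "dist a x < r"
    by auto
  then have "a + n \<in> A"
    using assms n unfolding zperiodic_def by blast
  moreover have "dist (a + n) (x + n) < r"
    using near by (simp add: dist_real_def)
  ultimately show "x + n \<in> (\<Union>a\<in>A. ball a r)"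
    by (auto intro!: bexI[of _ "a + n"])
qed

lemma bounded_span_mono:
  assumes "t \<le> t'" "N \<le> N'"
  shows "bounded_span \<alpha> t N \<subseteq> bounded_span \<alpha> t' N'"
proof
  fix x assume "x \<in> bounded_span \<alpha> t N"
  then obtain k where k_bound: "\<forall>i\<in>{1..t}. \<bar>k i\<bar> \<le> int N"
    and k_span: "x - (\<Sum>i=1..t. of_int (k i) * \<alpha> i) \<in> \<int>"
    unfolding bounded_span_def by blast
  define k' where "k' i = (if i \<le> t then k i else 0)" for i
  have "(\<Sum>i=1..t'. of_int (k' i) * \<alpha> i) = (\<Sum>i=1..t. of_int (k i) * \<alpha> i)"
    using assms(1) by (intro sum.mono_neutral_cong_right) (auto simp: k'_def)
  moreover have "\<bar>k' i\<bar> \<le> int N'" if "i \<in> {1..t'}" for i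
  proof (cases "i \<le> t")
    case True
    then have "\<bar>k i\<bar> \<le> int N"
      using k_bound that by simp
    then show ?thesis
      using True assms(2) by (simp add: k'_def)
  qed (simp add: k'_def)
  ultimately show "x \<in> bounded_span \<alpha> t' N'"
    using k_span unfolding bounded_span_def by (intro CollectI exI[of _ k']) simp
qed

lemma alpha_in_bounded_span:
  assumes "1 \<le> s" "s \<le> t" "1 \<le> N"
  shows "\<alpha> s \<in> bounded_span \<alpha> t N"
proof -
  define k :: "nat \<Rightarrow> int" where "k i = (if i = s then 1 else 0)" for i
  have "(\<Sum>i=1..t. of_int (k i) * \<alpha> i) = (\<Sum>i\<in>{1..t}. if i = s then \<alpha> i else 0)"
    by (intro sum.cong) (auto simp: k_def)
  also have "\<dots> = \<alpha> s"
    using assms(1,2) by simp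
  finally have "(\<Sum>i=1..t. of_int (k i) * \<alpha> i) = \<alpha> s" .
  moreover have "\<forall>i\<in>{1..t}. \<bar>k i\<bar> \<le> int N"
    using assms(3) by (simp add: k_def)
  ultimately show ?thesis
    unfolding bounded_span_def by (intro CollectI exI[of _ k]) simp
qed

lemma uniform_discrete_bounded_span: "uniform_discrete (bounded_span \<alpha> t N)"
proof -
  define K where "K = PiE {1..t} (\<lambda>_. {-int N..int N})"
  define span where "span k = (\<Sum>i=1..t. of_int (k i) * \<alpha> i)" for k :: "nat \<Rightarrow> int"
  have "bounded_span \<alpha> t N \<subseteq> {x. \<exists>f\<in>span ` K. x - f \<in> \<int>}"
  proof
    fix x assume "x \<in> bounded_span \<alpha> t N"
    then obtain k where k_bound: "\<forall>i\<in>{1..t}. \<bar>k i\<bar> \<le> int N" and "x - span k \<in> \<int>"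
      unfolding bounded_span_def span_def by blast
    moreover have "span (restrict k {1..t}) = span k"
      unfolding span_def by (intro sum.cong) auto
    moreover have "restrict k {1..t} \<in> K"
      using k_bound unfolding K_def by (auto simp: abs_le_iff)
    ultimately show "x \<in> {x. \<exists>f\<in>span ` K. x - f \<in> \<int>}"
      by (metis (mono_tags, lifting) image_eqI mem_Collect_eq)
  qed
  moreover have "finite (span ` K)"
    unfolding K_def by (intro finite_imageI finite_PiE) auto
  ultimately show ?thesis
    by (intro uniform_discrete_subset[OF uniform_discrete_finite_plus_Ints])
qed

lemma real_add_subgroup_int_mult:
  assumes "real_add_subgroup H" "a \<in> H"
  shows "of_int k * a \<in> H"
proof -
  have nat_mult: "of_nat n * a \<in> H" for n :: nat
    by (induction n) (use assms in \<open>auto simp: real_add_subgroup_def distrib_right\<close>)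
  show ?thesis
  proof (cases "k \<ge> 0")
    case True
    then show ?thesis
      using nat_mult[of "nat k"] by simp
  next
    case False
    then show ?thesis
      using nat_mult[of "nat (- k)"] assms(1) unfolding real_add_subgroup_def by force
  qed
qed

lemma real_add_subgroup_sum:
  assumes "real_add_subgroup H" "\<And>i. i \<in> S \<Longrightarrow> f i \<in> H"
  shows "sum f S \<in> H"
  using assms(2)
  by (induction S rule: infinite_finite_induct) (use assms(1) in \<open>auto simp: real_add_subgroup_def\<close>)

lemma bounded_span_subset_torus_set:
  assumes "real_add_subgroup (torus_set \<alpha>)"
  shows "bounded_span \<alpha> t N \<subseteq> torus_set \<alpha>"
proof
  fix x assume "x \<in> bounded_span \<alpha> t N"
  then obtain k where k: "x - (\<Sum>i=1..t. of_int (k i) * \<alpha> i) \<in> \<int>"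
    unfolding bounded_span_def by blast
  have "\<alpha> i \<in> torus_set \<alpha>" if "i \<ge> 1" for i
    using that unfolding torus_set_def by force
  then have "(\<Sum>i=1..t. of_int (k i) * \<alpha> i) \<in> torus_set \<alpha>"
    by (intro real_add_subgroup_sum[OF assms] real_add_subgroup_int_mult[OF assms]) auto
  then obtain s where "s \<ge> 1" "(\<Sum>i=1..t. of_int (k i) * \<alpha> i) - \<alpha> s \<in> \<int>"
    unfolding torus_set_def by blast
  moreover have "x - \<alpha> s = (x - (\<Sum>i=1..t. of_int (k i) * \<alpha> i)) + ((\<Sum>i=1..t. of_int (k i) * \<alpha> i) - \<alpha> s)"
    by simp
  ultimately have "x - \<alpha> s \<in> \<int>"
    using k Ints_add by metis
  with \<open>s \<ge> 1\<close> show "x \<in> torus_set \<alpha>"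
    unfolding torus_set_def by blast
qed

lemma Union_bounded_span_eq_torus_set:
  assumes "real_add_subgroup (torus_set \<alpha>)" and "\<And>t. t \<ge> 1 \<Longrightarrow> N t \<ge> 1"
  shows "(\<Union>t. bounded_span \<alpha> t (N t)) = torus_set \<alpha>"
proof (intro equalityI subsetI)
  fix x assume "x \<in> torus_set \<alpha>"
  then obtain s where "s \<ge> 1" "x - \<alpha> s \<in> \<int>"
    unfolding torus_set_def by blast
  then have "\<alpha> s + (x - \<alpha> s) \<in> bounded_span \<alpha> s (N s)"
    using alpha_in_bounded_span assms(2) zperiodic_bounded_span unfolding zperiodic_def by blast
  then show "x \<in> (\<Union>t. bounded_span \<alpha> t (N t))"
    by auto
qed (use bounded_span_subset_torus_set[OF assms(1)] in blast)

theorem lemma5: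
  fixes \<alpha> :: "nat \<Rightarrow> real" and M :: "nat \<Rightarrow> nat"
  assumes "real_add_subgroup (torus_set \<alpha>)"
    and "\<forall>t\<ge>1. M t > 0"
  shows "\<exists>V :: nat \<Rightarrow> real set.
           (\<forall>t\<ge>1. open (V t) \<and> zperiodic (V t) \<and> bounded_span \<alpha> t (M t) \<subseteq> V t) \<and>
           (\<Union>k\<in>{1..}. \<Inter>t\<in>{k..}. V t) = torus_set \<alpha>"
proof -
  define N where "N t = (\<Sum>j\<le>t. M j)" for t
  define A where "A t = bounded_span \<alpha> t (N t)" for t
  have M_le_N: "M t \<le> N t" for t
    unfolding N_def by (rule member_le_sum) auto
  have N_pos: "N t \<ge> 1" if "t \<ge> 1" for t
    using assms(2) M_le_N[of t] that by fastforce
  have A_mono: "incseq A"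
    unfolding incseq_def A_def N_def by (intro allI impI bounded_span_mono sum_mono2) auto
  have A_discrete: "\<And>t. uniform_discrete (A t)"
    unfolding A_def by (rule uniform_discrete_bounded_span)
  obtain r where r_pos: "\<And>t. r t > 0"
    and liminf: "\<And>x. (\<forall>\<^sub>F t in sequentially. x \<in> (\<Union>a\<in>A t. ball a (r t))) \<longleftrightarrow> x \<in> (\<Union>t. A t)"
    using shrinking_balls_eventually_iff[OF A_mono A_discrete] by metis
  have A_Union: "(\<Union>t. A t) = torus_set \<alpha>"
    unfolding A_def using assms(1) N_pos by (rule Union_bounded_span_eq_torus_set)
  define V where "V t = (\<Union>a\<in>A t. ball a (r t))" for t
  have liminf_V: "x \<in> {x. \<forall>\<^sub>F t in sequentially. x \<in> V t} \<longleftrightarrow> x \<in> torus_set \<alpha>" for x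
    unfolding mem_Collect_eq V_def A_Union[symmetric] by (rule liminf)
  show ?thesis
  proof (intro exI[of _ V] conjI allI impI)
    fix t :: nat
    show "open (V t)" "zperiodic (V t)"
      unfolding V_def A_def by (intro open_UN ballI open_ball zperiodic_Union_balls zperiodic_bounded_span)+
    have "bounded_span \<alpha> t (M t) \<subseteq> A t"
      unfolding A_def using M_le_N by (intro bounded_span_mono) auto
    moreover have "A t \<subseteq> V t"
    proof
      fix x assume "x \<in> A t"
      then show "x \<in> V t"
        unfolding V_def using r_pos[of t] by (intro UN_I[of x]) auto
    qed
    ultimately show "bounded_span \<alpha> t (M t) \<subseteq> V t"
      by (rule order_trans)
  next
    show "(\<Union>k\<in>{1..}. \<Inter>t\<in>{k..}. V t) = torus_set \<alpha>"
      unfolding Union_Inter_atLeast_eq_eventually using liminf_V by (rule set_eqI)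
  qed
qed

end
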